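(* Let $\varphi:\mathbb{R}\to\mathbb{R}_+$ be convex and twice differentiable, and suppose $\beta_\varphi>0$ satisfies $[\varphi'(x)]^2\le\beta_\varphi\varphi''(x)$ for all $|x|\le1$. Then for any $\beta\ge\beta_\varphi$, the aggregate classifier $\tilde h_n(x)=\hat\theta_n^\top H(x)$, where $\hat\theta_n$ is the mirror averaging aggregate with parameter $\beta$, satisfies $$E_n\varphi(-Y_n\tilde h_n(X_n))\le\min_{1\le j\le M}E\varphi(-Yh_j(X))+\frac{\beta\log M}{n}.$$
   Context: $(\mathcal{X},\mathcal{F})$ is a measurable space; $(X,Y)$ is a random pair with $X\in\mathcal{X}$, $Y\in\{-1,1\}$; $(X_1,Y_1),\dots,(X_n,Y_n)$ are i.i.d. copies of $(X,Y)$, $E_n$ is expectation w.r.t. them. $h_1,\dots,h_M:\mathcal{X}\to[-1,1]$ are fixed classifiers ($M\ge2$), $H(x)=(h_1(x),\dots,h_M(x))^\top$. $\Theta$ is the simplex in $\mathbb{R}^M$, $e_j$ the unit vectors. Loss: $Q((x,y),\theta)=\varphi(-y\theta^\top H(x))$. Mirror averaging aggregate with parameter $\beta$, with $Z_i=(X_i,Y_i)$: $\zeta_0=0$, $\zeta_i=\zeta_{i-1}+u_i$ ($i=1,\dots,n-1$), $u_i=(Q(Z_i,e_1),\dots,Q(Z_i,e_M))^\top$; $\theta_i^{(j)}=e^{-\zeta_i^{(j)}/\beta}/\sum_ke^{-\zeta_i^{(k)}/\beta}$ for $i=0,\dots,n-1$; $\hat\theta_n=\frac1n\sum_{i=1}^n\theta_{i-1}$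 (a function of $Z_1,\dots,Z_{n-1}$). *)

theory Defs
  imports "HOL-Probability.Probability"
begin

text \<open>Classifiers are indexed h 0, ..., h (M-1); a sample point z = (x, y) has x = fst z, y = snd z.
  The sample Z_1, ..., Z_n is a function Z :: nat => 'a * real drawn from PiM {1..n} (%_. P).\<close>

definition loss :: "(real \<Rightarrow> real) \<Rightarrow> nat \<Rightarrow> (nat \<Rightarrow> 'a \<Rightarrow> real) \<Rightarrow> ('a \<times> real) \<Rightarrow> (nat \<Rightarrow> real) \<Rightarrow> real" where
  "loss \<phi> M h z \<theta> = \<phi> (- snd z * (\<Sum>j<M. \<theta> j * h j (fst z)))"

definition zeta :: "(real \<Rightarrow> real) \<Rightarrow> nat \<Rightarrow> (nat \<Rightarrow> 'a \<Rightarrow> real) \<Rightarrow> (nat \<Rightarrow> 'a \<times> real) \<Rightarrow> nat \<Rightarrow> nat \<Rightarrow> real" where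
  "zeta \<phi> M h Z i j = (\<Sum>k\<in>{1..i}. loss \<phi> M h (Z k) (\<lambda>l. if l = j then 1 else 0))"

definition mirror_weight :: "(real \<Rightarrow> real) \<Rightarrow> nat \<Rightarrow> (nat \<Rightarrow> 'a \<Rightarrow> real) \<Rightarrow> real \<Rightarrow> (nat \<Rightarrow> 'a \<times> real) \<Rightarrow> nat \<Rightarrow> nat \<Rightarrow> real" where
  "mirror_weight \<phi> M h \<beta> Z i j =
     exp (- zeta \<phi> M h Z i j / \<beta>) / (\<Sum>k<M. exp (- zeta \<phi> M h Z i k / \<beta>))"

definition mirror_avg :: "(real \<Rightarrow> real) \<Rightarrow> nat \<Rightarrow> (nat \<Rightarrow> 'a \<Rightarrow> real) \<Rightarrow> real \<Rightarrow> nat \<Rightarrow> (nat \<Rightarrow> 'a \<times> real) \<Rightarrow> nat \<Rightarrow> real" where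
  "mirror_avg \<phi> M h \<beta> n Z j = (1 / real n) * (\<Sum>i\<in>{1..n}. mirror_weight \<phi> M h \<beta> Z (i - 1) j)"

end

theory Submission
  imports Defs
begin

text \<open>The condition \<open>(\<phi>')\<^sup>2 \<le> \<beta> \<phi>''\<close> on \<open>[-1, 1]\<close> makes \<open>exp (- \<phi> / \<beta>)\<close> concave there. Since margins of
  convex combinations of the classifiers stay in \<open>[-1, 1]\<close>, at every sample point \<open>z\<close> the
  \<open>\<theta>\<close>-mixture of the numbers \<open>exp (- Q(z, e_j) / \<beta>)\<close> is at most \<open>exp (- Q(z, \<theta>) / \<beta>)\<close>. For the
  exponential weights this means that the potential \<open>W_i = \<Sum>_k exp (- \<zeta>_i(k) / \<beta>)\<close> satisfies
  \<open>W_(i+1) \<le> W_i exp (- Q(Z_(i+1), \<theta>_i) / \<beta>)\<close>; telescoping from \<open>W_0 = M\<close> gives, for every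
  sample and every \<open>j\<close>, \<open>\<Sum>_i Q(Z_i, \<theta>_(i-1)) \<le> \<zeta>_n(j) + \<beta> log M\<close>.

  Taking expectations: \<open>\<theta>_(i-1)\<close> depends only on \<open>Z_1, ..., Z_(i-1)\<close>, so swapping \<open>Z_i\<close> and \<open>Z_n\<close>
  shows \<open>E Q(Z_n, \<theta>_(i-1)) = E Q(Z_i, \<theta>_(i-1))\<close>, and by convexity of \<open>\<phi>\<close> the loss of the
  average \<open>\<theta>\<close> at \<open>Z_n\<close> is at most the average of these losses.\<close>

definition prob_simplex :: "nat \<Rightarrow> (nat \<Rightarrow> real) set" where
  "prob_simplex M = {\<theta>. (\<forall>j<M. 0 \<le> \<theta> j) \<and> (\<Sum>j<M. \<theta> j) = 1}"

definition bounded_margins :: "nat \<Rightarrow> (nat \<Rightarrow> 'a \<Rightarrow> real) \<Rightarrow> 'a \<times> real \<Rightarrow> bool" where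
  "bounded_margins M h z \<longleftrightarrow> (\<forall>j<M. - snd z * h j (fst z) \<in> {-1..1})"

definition mirror_potential ::
    "(real \<Rightarrow> real) \<Rightarrow> nat \<Rightarrow> (nat \<Rightarrow> 'a \<Rightarrow> real) \<Rightarrow> real \<Rightarrow> (nat \<Rightarrow> 'a \<times> real) \<Rightarrow> nat \<Rightarrow> real"
  where
  "mirror_potential \<phi> M h \<beta> Z i = (\<Sum>k<M. exp (- zeta \<phi> M h Z i k / \<beta>))"

lemma concave_on_exp_neg_div:
  fixes f f' f'' :: "real \<Rightarrow> real"
  assumes "convex C" and "0 < \<beta>\<^sub>0" and "\<beta>\<^sub>0 \<le> \<beta>"
    and f': "\<And>x. x \<in> C \<Longrightarrow> (f has_real_derivative f' x) (at x)"
    and f'': "\<And>x. x \<in> C \<Longrightarrow> (f' has_real_derivative f'' x) (at x)"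
    and bound: "\<And>x. x \<in> C \<Longrightarrow> (f' x)\<^sup>2 \<le> \<beta>\<^sub>0 * f'' x"
  shows "concave_on C (\<lambda>x. exp (- f x / \<beta>))"
proof (rule f''_le0_imp_concave[OF \<open>convex C\<close>])
  fix x assume "x \<in> C"
  have "\<beta> > 0"
    using assms(2,3) by simp
  show "((\<lambda>x. exp (- f x / \<beta>)) has_real_derivative - exp (- f x / \<beta>) * f' x / \<beta>) (at x)"
    using \<open>\<beta> > 0\<close> by (auto intro!: derivative_eq_intros f' \<open>x \<in> C\<close>)
  show "((\<lambda>x. - exp (- f x / \<beta>) * f' x / \<beta>) has_real_derivative
      exp (- f x / \<beta>) * ((f' x)\<^sup>2 / \<beta> - f'' x) / \<beta>) (at x)"
    using \<open>\<beta> > 0\<close>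
    by (auto intro!: derivative_eq_intros f' f'' \<open>x \<in> C\<close> simp: power2_eq_square field_simps)
  have "0 \<le> \<beta>\<^sub>0 * f'' x"
    using bound[OF \<open>x \<in> C\<close>] by (rule order_trans[OF zero_le_power2])
  then have "f'' x \<ge> 0"
    using \<open>0 < \<beta>\<^sub>0\<close> by (simp add: zero_le_mult_iff)
  then have "(f' x)\<^sup>2 \<le> \<beta> * f'' x"
    using bound[OF \<open>x \<in> C\<close>] \<open>\<beta>\<^sub>0 \<le> \<beta>\<close> by (meson mult_right_mono order_trans)
  then show "exp (- f x / \<beta>) * ((f' x)\<^sup>2 / \<beta> - f'' x) / \<beta> \<le> 0"
    using \<open>\<beta> > 0\<close> by (simp add: mult_le_0_iff field_simps)
qed

lemma loss_unit_vector:
  assumes "j < M"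
  shows "loss \<phi> M h z (\<lambda>l. if l = j then 1 else 0) = \<phi> (- snd z * h j (fst z))"
  using assms by (simp add: loss_def if_distrib[of "\<lambda>c. c * _"] cong: if_cong)

lemma margin_in_unit_interval:
  assumes "bounded_margins M h z" and "\<theta> \<in> prob_simplex M"
  shows "- snd z * (\<Sum>j<M. \<theta> j * h j (fst z)) \<in> {-1..1}"
proof -
  have "(\<Sum>j<M. \<theta> j *\<^sub>R (- snd z * h j (fst z))) \<in> {-1..1::real}"
    using assms by (intro convex_sum) (auto simp: prob_simplex_def bounded_margins_def)
  then show ?thesis by (simp add: sum_distrib_left algebra_simps)
qed

lemma mixture_le_exp_neg_loss:
  assumes "concave_on {-1..1} (\<lambda>x. exp (- \<phi> x / \<beta>))"
    and "bounded_margins M h z" and "\<theta> \<in> prob_simplex M"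
  shows "(\<Sum>j<M. \<theta> j * exp (- \<phi> (- snd z * h j (fst z)) / \<beta>)) \<le> exp (- loss \<phi> M h z \<theta> / \<beta>)"
proof -
  have "M \<noteq> 0" using \<open>\<theta> \<in> prob_simplex M\<close> by (cases M) (auto simp: prob_simplex_def)
  have "(\<Sum>j<M. \<theta> j * exp (- \<phi> (- snd z * h j (fst z)) / \<beta>))
      \<le> exp (- \<phi> (\<Sum>j<M. \<theta> j *\<^sub>R (- snd z * h j (fst z))) / \<beta>)"
    using assms \<open>M \<noteq> 0\<close>
    by (intro concave_on_sum[where C = "{-1..1}"]) (auto simp: prob_simplex_def bounded_margins_def)
  then show ?thesis by (simp add: loss_def sum_distrib_left algebra_simps)
qed

lemma loss_average_le:
  assumes "convex_on UNIV \<phi>" and "finite I" and "I \<noteq> {}"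
  shows "loss \<phi> M h z (\<lambda>j. (\<Sum>i\<in>I. \<Theta> i j) / card I)
    \<le> (\<Sum>i\<in>I. loss \<phi> M h z (\<Theta> i)) / card I"
proof -
  define y where "y i = - snd z * (\<Sum>j<M. \<Theta> i j * h j (fst z))" for i
  have "\<phi> (\<Sum>i\<in>I. (1 / card I) *\<^sub>R y i) \<le> (\<Sum>i\<in>I. (1 / card I) * \<phi> (y i))"
    using assms by (intro convex_on_sum) auto
  moreover have "(\<Sum>i\<in>I. (1 / card I) *\<^sub>R y i)
      = - snd z * (\<Sum>j<M. (\<Sum>i\<in>I. \<Theta> i j) / card I * h j (fst z))"
    unfolding y_def
    by (simp add: sum_distrib_left sum_distrib_right sum_divide_distrib algebra_simps sum.swap[of _ I])
  ultimately show ?thesis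
    by (simp add: loss_def y_def sum_divide_distrib)
qed

lemma mirror_potential_pos: "M > 0 \<Longrightarrow> mirror_potential \<phi> M h \<beta> Z i > 0"
  unfolding mirror_potential_def by (intro sum_pos) auto

lemma mirror_potential_0: "mirror_potential \<phi> M h \<beta> Z 0 = M"
  by (simp add: mirror_potential_def zeta_def)

lemma mirror_weight_eq:
  "mirror_weight \<phi> M h \<beta> Z i j = exp (- zeta \<phi> M h Z i j / \<beta>) / mirror_potential \<phi> M h \<beta> Z i"
  by (simp add: mirror_weight_def mirror_potential_def)

lemma mirror_weight_in_prob_simplex: "M > 0 \<Longrightarrow> mirror_weight \<phi> M h \<beta> Z i \<in> prob_simplex M"
  using mirror_potential_pos[of M \<phi> h \<beta> Z i]
  by (simp add: prob_simplex_def mirror_weight_eq sum_divide_distrib[symmetric])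
    (simp add: mirror_potential_def)

lemma mirror_weight_cong:
  assumes "\<And>k. k \<in> {1..i} \<Longrightarrow> Z k = Z' k"
  shows "mirror_weight \<phi> M h \<beta> Z i = mirror_weight \<phi> M h \<beta> Z' i"
proof -
  have "zeta \<phi> M h Z i = zeta \<phi> M h Z' i"
    unfolding zeta_def using assms by (intro ext sum.cong) auto
  then show ?thesis
    by (simp add: mirror_weight_def fun_eq_iff)
qed

lemma mirror_avg_eq:
  "mirror_avg \<phi> M h \<beta> n Z = (\<lambda>j. (\<Sum>i\<in>{1..n}. mirror_weight \<phi> M h \<beta> Z (i - 1) j) / card {1..n})"
  by (simp add: mirror_avg_def fun_eq_iff)

lemma mirror_avg_in_prob_simplex:
  assumes "M > 0" and "n \<ge> 1"
  shows "mirror_avg \<phi> M h \<beta> n Z \<in> prob_simplex M"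
proof -
  have "(\<Sum>j<M. \<Sum>i\<in>{1..n}. mirror_weight \<phi> M h \<beta> Z (i - 1) j) = n"
    using mirror_weight_in_prob_simplex[OF \<open>M > 0\<close>, of \<phi> h \<beta> Z]
    by (subst sum.swap) (simp add: prob_simplex_def)
  then show ?thesis
    using mirror_weight_in_prob_simplex[OF \<open>M > 0\<close>, of \<phi> h \<beta> Z] \<open>n \<ge> 1\<close>
    by (auto simp: prob_simplex_def mirror_avg_def sum_nonneg simp flip: sum_divide_distrib)
qed

lemma mirror_potential_Suc:
  assumes "M > 0"
  shows "mirror_potential \<phi> M h \<beta> Z (Suc i) = mirror_potential \<phi> M h \<beta> Z i *
    (\<Sum>j<M. mirror_weight \<phi> M h \<beta> Z i j * exp (- \<phi> (- snd (Z (Suc i)) * h j (fst (Z (Suc i)))) / \<beta>))"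
proof -
  let ?e = "\<lambda>j. exp (- \<phi> (- snd (Z (Suc i)) * h j (fst (Z (Suc i)))) / \<beta>)"
  have "exp (- zeta \<phi> M h Z (Suc i) j / \<beta>)
      = mirror_potential \<phi> M h \<beta> Z i * (mirror_weight \<phi> M h \<beta> Z i j * ?e j)" if "j < M" for j
  proof -
    have "zeta \<phi> M h Z (Suc i) j = zeta \<phi> M h Z i j + \<phi> (- snd (Z (Suc i)) * h j (fst (Z (Suc i))))"
      using that by (simp add: zeta_def loss_unit_vector)
    then have "exp (- zeta \<phi> M h Z (Suc i) j / \<beta>) = exp (- zeta \<phi> M h Z i j / \<beta>) * ?e j"
      by (simp add: diff_divide_distrib flip: exp_add)
    then show ?thesis
      using mirror_potential_pos[OF assms, of \<phi> h \<beta> Z i] by (simp add: mirror_weight_eq)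
  qed
  then show ?thesis
    by (simp add: mirror_potential_def[of _ _ _ _ _ "Suc i"] sum_distrib_left)
qed

lemma mirror_weight_step:
  assumes "concave_on {-1..1} (\<lambda>x. exp (- \<phi> x / \<beta>))" and "\<beta> > 0" and "M > 0"
    and "bounded_margins M h (Z (Suc i))"
  shows "loss \<phi> M h (Z (Suc i)) (mirror_weight \<phi> M h \<beta> Z i)
    \<le> \<beta> * ln (mirror_potential \<phi> M h \<beta> Z i) - \<beta> * ln (mirror_potential \<phi> M h \<beta> Z (Suc i))"
proof -
  let ?W = "mirror_potential \<phi> M h \<beta> Z"
  let ?L = "loss \<phi> M h (Z (Suc i)) (mirror_weight \<phi> M h \<beta> Z i)"
  have "?W (Suc i) \<le> ?W i * exp (- ?L / \<beta>)"
    unfolding mirror_potential_Suc[OF \<open>M > 0\<close>]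
    using mixture_le_exp_neg_loss[OF assms(1,4) mirror_weight_in_prob_simplex[OF \<open>M > 0\<close>]]
      mirror_potential_pos[OF \<open>M > 0\<close>, of \<phi> h \<beta> Z i]
    by (simp add: mult_left_mono)
  then have "ln (?W (Suc i)) \<le> ln (?W i * exp (- ?L / \<beta>))"
    using mirror_potential_pos[OF \<open>M > 0\<close>, of \<phi> h \<beta> Z] by (subst ln_le_cancel_iff) auto
  also have "\<dots> = ln (?W i) - ?L / \<beta>"
    using mirror_potential_pos[OF \<open>M > 0\<close>, of \<phi> h \<beta> Z i] by (simp add: ln_mult)
  finally have "ln (?W (Suc i)) \<le> ln (?W i) - ?L / \<beta>" .
  then show ?thesis
    using \<open>\<beta> > 0\<close> by (simp add: field_simps)
qed

lemma mirror_averaging_regret: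
  assumes "concave_on {-1..1} (\<lambda>x. exp (- \<phi> x / \<beta>))" and "\<beta> > 0" and "j < M"
    and "\<And>k. k \<in> {1..n} \<Longrightarrow> bounded_margins M h (Z k)"
  shows "(\<Sum>i\<in>{1..n}. loss \<phi> M h (Z i) (mirror_weight \<phi> M h \<beta> Z (i - 1)))
    \<le> zeta \<phi> M h Z n j + \<beta> * ln M"
proof -
  let ?W = "mirror_potential \<phi> M h \<beta> Z"
  have "M > 0" using \<open>j < M\<close> by simp
  have "(\<Sum>i\<in>{1..n}. loss \<phi> M h (Z i) (mirror_weight \<phi> M h \<beta> Z (i - 1)))
      = (\<Sum>i<n. loss \<phi> M h (Z (Suc i)) (mirror_weight \<phi> M h \<beta> Z i))"
    by (simp add: sum.atLeast1_atMost_eq)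
  also have "\<dots> \<le> (\<Sum>i<n. \<beta> * ln (?W i) - \<beta> * ln (?W (Suc i)))"
    using assms \<open>M > 0\<close> by (intro sum_mono mirror_weight_step) auto
  also have "\<dots> = \<beta> * ln M - \<beta> * ln (?W n)"
    using sum_lessThan_telescope'[of "\<lambda>i. \<beta> * ln (?W i)"] by (simp add: mirror_potential_0)
  also have "\<dots> \<le> \<beta> * ln M + zeta \<phi> M h Z n j"
  proof -
    have "exp (- zeta \<phi> M h Z n j / \<beta>) \<le> ?W n"
      unfolding mirror_potential_def using \<open>j < M\<close> by (intro member_le_sum) auto
    then have "- zeta \<phi> M h Z n j / \<beta> \<le> ln (?W n)"
      using mirror_potential_pos[OF \<open>M > 0\<close>] by (subst ln_ge_iff) auto
    then show ?thesis
      using \<open>\<beta> > 0\<close> by (simp add: field_simps)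
  qed
  finally show ?thesis by simp
qed

lemma integral_PiM_component:
  fixes f :: "'a \<Rightarrow> real"
  assumes "\<And>i. i \<in> I \<Longrightarrow> prob_space (M i)" and "i \<in> I" and "f \<in> borel_measurable (M i)"
  shows "(\<integral>\<omega>. f (\<omega> i) \<partial>PiM I M) = integral\<^sup>L (M i) f"
  using integral_distr[OF measurable_component_singleton[OF assms(2), of M] assms(3)]
    distr_PiM_component[of I M i] assms(1,2) by simp

lemma integral_PiM_reindex:
  fixes f :: "(_ \<Rightarrow> 'a) \<Rightarrow> real"
  assumes "prob_space P" and "inj_on \<sigma> I" and "\<sigma> \<in> I \<rightarrow> I"
    and "f \<in> borel_measurable (PiM I (\<lambda>_. P))"
  shows "(\<integral>\<omega>. f (\<lambda>i\<in>I. \<omega> (\<sigma> i)) \<partial>PiM I (\<lambda>_. P)) = (\<integral>\<omega>. f \<omega> \<partial>PiM I (\<lambda>_. P))"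
proof -
  have "distr (PiM I (\<lambda>_. P)) (PiM I (\<lambda>_. P)) (\<lambda>\<omega>. \<lambda>i\<in>I. \<omega> (\<sigma> i)) = PiM I (\<lambda>_. P)"
    using distr_PiM_reindex[of I "\<lambda>_. P" \<sigma> I] assms by simp
  moreover have "(\<lambda>\<omega>. \<lambda>i\<in>I. \<omega> (\<sigma> i)) \<in> measurable (PiM I (\<lambda>_. P)) (PiM I (\<lambda>_. P))"
    using assms(3) by (intro measurable_restrict measurable_component_singleton) auto
  ultimately show ?thesis
    using integral_distr assms(4) by metis
qed

locale binary_classification =
  fixes Mx :: "'a measure" and P :: "('a \<times> real) measure"
    and M :: nat and h :: "nat \<Rightarrow> 'a \<Rightarrow> real" and \<phi> :: "real \<Rightarrow> real"
  assumes prob_space_P: "prob_space P" and sets_P: "sets P = sets (Mx \<Otimes>\<^sub>M borel)"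
    and labels: "AE z in P. snd z \<in> {-1, 1}"
    and h_meas: "\<And>j. j < M \<Longrightarrow> h j \<in> borel_measurable Mx"
    and h_range: "\<And>j x. j < M \<Longrightarrow> x \<in> space Mx \<Longrightarrow> h j x \<in> {-1..1}"
    and continuous_\<phi>: "continuous_on UNIV \<phi>"
begin

abbreviation sample :: "nat \<Rightarrow> (nat \<Rightarrow> 'a \<times> real) measure" where
  "sample n \<equiv> PiM {1..n} (\<lambda>_. P)"

lemma prob_space_sample: "prob_space (sample n)"
  by (intro prob_space_PiM prob_space_P)

lemma measurable_label: "snd \<in> borel_measurable P"
  unfolding measurable_cong_sets[OF sets_P refl] by (rule measurable_snd)

lemma measurable_classifier: "j < M \<Longrightarrow> (\<lambda>z. h j (fst z)) \<in> borel_measurable P"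
  unfolding measurable_cong_sets[OF sets_P refl] by (rule measurable_compose[OF measurable_fst h_meas])

lemma measurable_\<phi>: "\<phi> \<in> borel_measurable borel"
  using continuous_\<phi> by (rule borel_measurable_continuous_onI)

lemma AE_bounded_margins: "AE z in P. bounded_margins M h z"
  using labels AE_space
proof eventually_elim
  case (elim z)
  then have "fst z \<in> space Mx"
    using sets_eq_imp_space_eq[OF sets_P] by (auto simp: space_pair_measure)
  then show ?case
    using elim h_range by (auto simp: bounded_margins_def)
qed

lemma AE_sample_bounded_margins: "AE Z in sample n. \<forall>k\<in>{1..n}. bounded_margins M h (Z k)"
  using prob_space_P AE_bounded_margins
  by (intro AE_finite_allI[OF finite_atLeastAtMost] AE_PiM_component) auto

lemma measurable_loss:
  assumes "k \<in> {1..n}" and "\<And>j. j < M \<Longrightarrow> (\<lambda>Z. \<Theta> Z j) \<in> borel_measurable (sample n)"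
  shows "(\<lambda>Z. loss \<phi> M h (Z k) (\<Theta> Z)) \<in> borel_measurable (sample n)"
proof -
  have component: "(\<lambda>Z. Z k) \<in> measurable (sample n) P"
    using assms(1) by (rule measurable_component_singleton)
  show ?thesis
    unfolding loss_def using assms(2)
    by (intro measurable_compose[OF _ measurable_\<phi>] borel_measurable_uminus borel_measurable_times
        borel_measurable_sum measurable_compose[OF component measurable_label]
        measurable_compose[OF component measurable_classifier]) auto
qed

lemma measurable_mirror_weight:
  assumes "i \<le> n"
  shows "(\<lambda>Z. mirror_weight \<phi> M h \<beta> Z i j) \<in> borel_measurable (sample n)"
proof -
  have "(\<lambda>Z. zeta \<phi> M h Z i l) \<in> borel_measurable (sample n)" for l
    unfolding zeta_def using assms by (intro borel_measurable_sum measurable_loss) auto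
  then show ?thesis
    unfolding mirror_weight_def by measurable
qed

lemma measurable_mirror_avg: "(\<lambda>Z. mirror_avg \<phi> M h \<beta> n Z j) \<in> borel_measurable (sample n)"
  unfolding mirror_avg_def
  by (intro borel_measurable_times borel_measurable_const borel_measurable_sum measurable_mirror_weight) auto

lemma integrable_loss:
  assumes "k \<in> {1..n}" and "\<And>j. j < M \<Longrightarrow> (\<lambda>Z. \<Theta> Z j) \<in> borel_measurable (sample n)"
    and "\<And>Z. \<Theta> Z \<in> prob_simplex M"
  shows "integrable (sample n) (\<lambda>Z. loss \<phi> M h (Z k) (\<Theta> Z))"
proof -
  interpret prob_space "sample n" by (rule prob_space_sample)
  have "compact (\<phi> ` {-1..1})"
    using continuous_\<phi> by (intro compact_continuous_image compact_Icc) (rule continuous_on_subset, auto)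
  then obtain B where B: "\<And>x. x \<in> {-1..1} \<Longrightarrow> \<bar>\<phi> x\<bar> \<le> B"
    by (force dest!: compact_imp_bounded simp: bounded_iff)
  show ?thesis
  proof (rule integrable_const_bound[where B = B])
    show "AE Z in sample n. norm (loss \<phi> M h (Z k) (\<Theta> Z)) \<le> B"
      using AE_sample_bounded_margins
    proof eventually_elim
      case (elim Z)
      then have "- snd (Z k) * (\<Sum>j<M. \<Theta> Z j * h j (fst (Z k))) \<in> {-1..1}"
        using assms by (intro margin_in_unit_interval) auto
      then show ?case
        using B by (simp add: loss_def)
    qed
  qed (rule measurable_loss[OF assms(1,2)])
qed

lemma integral_loss_unit_vector:
  assumes "k \<in> {1..n}" and "j < M"
  shows "(\<integral>Z. loss \<phi> M h (Z k) (\<lambda>l. if l = j then 1 else 0) \<partial>sample n)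
    = (\<integral>z. \<phi> (- snd z * h j (fst z)) \<partial>P)"
proof -
  have "(\<lambda>z. \<phi> (- snd z * h j (fst z))) \<in> borel_measurable P"
    using measurable_label measurable_classifier[OF assms(2)]
    by (intro measurable_compose[OF _ measurable_\<phi>]) auto
  then show ?thesis
    using integral_PiM_component[of "{1..n}" "\<lambda>_. P" k] prob_space_P assms by (simp add: loss_unit_vector)
qed

lemma integral_loss_exchange:
  assumes "i \<in> {1..n}"
  shows "(\<integral>Z. loss \<phi> M h (Z n) (mirror_weight \<phi> M h \<beta> Z (i - 1)) \<partial>sample n)
    = (\<integral>Z. loss \<phi> M h (Z i) (mirror_weight \<phi> M h \<beta> Z (i - 1)) \<partial>sample n)"
proof -
  define \<sigma> where "\<sigma> k = (if k = i then n else if k = n then i else k)" for k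
  have "inj_on \<sigma> {1..n}" and "\<sigma> \<in> {1..n} \<rightarrow> {1..n}"
    using assms by (auto simp: \<sigma>_def inj_on_def)
  moreover have "(\<lambda>Z. loss \<phi> M h (Z n) (mirror_weight \<phi> M h \<beta> Z (i - 1))) \<in> borel_measurable (sample n)"
    using assms by (intro measurable_loss measurable_mirror_weight) auto
  ultimately have "(\<integral>Z. loss \<phi> M h (Z n) (mirror_weight \<phi> M h \<beta> Z (i - 1)) \<partial>sample n)
    = (\<integral>Z. loss \<phi> M h ((\<lambda>k\<in>{1..n}. Z (\<sigma> k)) n)
          (mirror_weight \<phi> M h \<beta> (\<lambda>k\<in>{1..n}. Z (\<sigma> k)) (i - 1)) \<partial>sample n)"
    by (intro integral_PiM_reindex[OF prob_space_P, symmetric])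
  also have "\<dots> = (\<integral>Z. loss \<phi> M h (Z i) (mirror_weight \<phi> M h \<beta> Z (i - 1)) \<partial>sample n)"
  proof -
    have "mirror_weight \<phi> M h \<beta> (\<lambda>k\<in>{1..n}. Z (\<sigma> k)) (i - 1) = mirror_weight \<phi> M h \<beta> Z (i - 1)" for Z
      using assms by (intro mirror_weight_cong) (auto simp: \<sigma>_def)
    then show ?thesis
      using assms by (simp add: \<sigma>_def)
  qed
  finally show ?thesis .
qed

lemma expected_loss_mirror_avg_le:
  assumes "convex_on UNIV \<phi>" and "n \<ge> 1" and "M > 0"
  shows "(\<integral>Z. loss \<phi> M h (Z n) (mirror_avg \<phi> M h \<beta> n Z) \<partial>sample n)
    \<le> (\<integral>Z. (\<Sum>i\<in>{1..n}. loss \<phi> M h (Z i) (mirror_weight \<phi> M h \<beta> Z (i - 1))) \<partial>sample n) / n"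
proof -
  have integrable_weight_loss:
    "integrable (sample n) (\<lambda>Z. loss \<phi> M h (Z k) (mirror_weight \<phi> M h \<beta> Z (i - 1)))"
    if "k \<in> {1..n}" and "i \<in> {1..n}" for k i
    using that \<open>M > 0\<close>
    by (intro integrable_loss measurable_mirror_weight mirror_weight_in_prob_simplex) auto
  have "(\<integral>Z. loss \<phi> M h (Z n) (mirror_avg \<phi> M h \<beta> n Z) \<partial>sample n)
      \<le> (\<integral>Z. (\<Sum>i\<in>{1..n}. loss \<phi> M h (Z n) (mirror_weight \<phi> M h \<beta> Z (i - 1))) / n \<partial>sample n)"
  proof (rule integral_mono)
    show "integrable (sample n) (\<lambda>Z. loss \<phi> M h (Z n) (mirror_avg \<phi> M h \<beta> n Z))"
      using assms by (intro integrable_loss measurable_mirror_avg mirror_avg_in_prob_simplex) auto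
    show "integrable (sample n) (\<lambda>Z. (\<Sum>i\<in>{1..n}. loss \<phi> M h (Z n) (mirror_weight \<phi> M h \<beta> Z (i - 1))) / n)"
      using integrable_weight_loss by (intro integrable_divide_zero Bochner_Integration.integrable_sum) auto
    show "loss \<phi> M h (Z n) (mirror_avg \<phi> M h \<beta> n Z)
      \<le> (\<Sum>i\<in>{1..n}. loss \<phi> M h (Z n) (mirror_weight \<phi> M h \<beta> Z (i - 1))) / n" for Z
      using loss_average_le[OF \<open>convex_on UNIV \<phi>\<close>, of "{1..n}"] \<open>n \<ge> 1\<close> by (simp add: mirror_avg_eq)
  qed
  also have "\<dots> = (\<Sum>i\<in>{1..n}. \<integral>Z. loss \<phi> M h (Z n) (mirror_weight \<phi> M h \<beta> Z (i - 1)) \<partial>sample n) / n"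
    using \<open>n \<ge> 1\<close> integrable_weight_loss by (simp add: integral_sum)
  also have "\<dots> = (\<Sum>i\<in>{1..n}. \<integral>Z. loss \<phi> M h (Z i) (mirror_weight \<phi> M h \<beta> Z (i - 1)) \<partial>sample n) / n"
    by (rule arg_cong[where f = "\<lambda>s. s / n"], rule sum.cong[OF refl integral_loss_exchange])
  also have "\<dots> = (\<integral>Z. (\<Sum>i\<in>{1..n}. loss \<phi> M h (Z i) (mirror_weight \<phi> M h \<beta> Z (i - 1))) \<partial>sample n) / n"
    using integrable_weight_loss by (simp add: integral_sum)
  finally show ?thesis .
qed

lemma expected_cumulative_loss_le:
  assumes "concave_on {-1..1} (\<lambda>x. exp (- \<phi> x / \<beta>))" and "\<beta> > 0" and "j < M"
  shows "(\<integral>Z. (\<Sum>i\<in>{1..n}. loss \<phi> M h (Z i) (mirror_weight \<phi> M h \<beta> Z (i - 1))) \<partial>sample n)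
    \<le> n * (\<integral>z. \<phi> (- snd z * h j (fst z)) \<partial>P) + \<beta> * ln M"
proof -
  interpret prob_space "sample n" by (rule prob_space_sample)
  have "M > 0" using \<open>j < M\<close> by simp
  have integrable_unit_loss:
    "integrable (sample n) (\<lambda>Z. loss \<phi> M h (Z k) (\<lambda>l. if l = j then 1 else 0))" if "k \<in> {1..n}" for k
    using that \<open>j < M\<close> by (intro integrable_loss) (auto simp: prob_simplex_def)
  have integrable_zeta: "integrable (sample n) (\<lambda>Z. zeta \<phi> M h Z n j)"
    unfolding zeta_def using integrable_unit_loss by auto
  have "(\<integral>Z. (\<Sum>i\<in>{1..n}. loss \<phi> M h (Z i) (mirror_weight \<phi> M h \<beta> Z (i - 1))) \<partial>sample n)
      \<le> (\<integral>Z. zeta \<phi> M h Z n j + \<beta> * ln M \<partial>sample n)"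
  proof (rule integral_mono_AE)
    show "integrable (sample n) (\<lambda>Z. \<Sum>i\<in>{1..n}. loss \<phi> M h (Z i) (mirror_weight \<phi> M h \<beta> Z (i - 1)))"
      using \<open>M > 0\<close>
      by (intro Bochner_Integration.integrable_sum integrable_loss measurable_mirror_weight
          mirror_weight_in_prob_simplex) auto
    show "integrable (sample n) (\<lambda>Z. zeta \<phi> M h Z n j + \<beta> * ln M)"
      by (intro Bochner_Integration.integrable_add integrable_zeta integrable_const)
    show "AE Z in sample n. (\<Sum>i\<in>{1..n}. loss \<phi> M h (Z i) (mirror_weight \<phi> M h \<beta> Z (i - 1)))
        \<le> zeta \<phi> M h Z n j + \<beta> * ln M"
      using AE_sample_bounded_margins by eventually_elim (rule mirror_averaging_regret[OF assms], auto)
  qed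
  also have "\<dots> = (\<integral>Z. zeta \<phi> M h Z n j \<partial>sample n) + \<beta> * ln M"
    unfolding Bochner_Integration.integral_add[OF integrable_zeta integrable_const] using prob_space by simp
  also have "(\<integral>Z. zeta \<phi> M h Z n j \<partial>sample n)
      = (\<Sum>k\<in>{1..n}. \<integral>Z. loss \<phi> M h (Z k) (\<lambda>l. if l = j then 1 else 0) \<partial>sample n)"
    unfolding zeta_def by (rule Bochner_Integration.integral_sum) (rule integrable_unit_loss)
  also have "\<dots> = n * (\<integral>z. \<phi> (- snd z * h j (fst z)) \<partial>P)"
    using integral_loss_unit_vector[of _ n, OF _ \<open>j < M\<close>] by simp
  finally show ?thesis .
qed

end

theorem corollary5p3:
  fixes Mx :: "'a measure" and P :: "('a \<times> real) measure"
    and h :: "nat \<Rightarrow> 'a \<Rightarrow> real" and M n :: nat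
    and \<phi> \<phi>' \<phi>'' :: "real \<Rightarrow> real" and \<beta>\<phi> \<beta> :: real
  assumes P: "prob_space P" and sets_P: "sets P = sets (Mx \<Otimes>\<^sub>M borel)"
    and Y: "AE z in P. snd z \<in> {-1, 1}"
    and M: "M \<ge> 2" and n: "n \<ge> 1"
    and h_meas: "\<And>j. j < M \<Longrightarrow> h j \<in> borel_measurable Mx"
    and h_range: "\<And>j x. j < M \<Longrightarrow> x \<in> space Mx \<Longrightarrow> h j x \<in> {-1..1}"
    and \<phi>_nonneg: "\<And>x. \<phi> x \<ge> 0"
    and \<phi>_convex: "convex_on UNIV \<phi>"
    and \<phi>_deriv: "\<And>x. (\<phi> has_real_derivative \<phi>' x) (at x)"
    and \<phi>'_deriv: "\<And>x. (\<phi>' has_real_derivative \<phi>'' x) (at x)"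
    and \<beta>\<phi>_pos: "\<beta>\<phi> > 0"
    and cond: "\<And>x. \<bar>x\<bar> \<le> 1 \<Longrightarrow> (\<phi>' x)\<^sup>2 \<le> \<beta>\<phi> * \<phi>'' x"
    and \<beta>: "\<beta> \<ge> \<beta>\<phi>"
  shows "(\<integral>Z. loss \<phi> M h (Z n) (mirror_avg \<phi> M h \<beta> n Z) \<partial>(PiM {1..n} (\<lambda>_. P)))
           \<le> Min ((\<lambda>j. \<integral>z. \<phi> (- snd z * h j (fst z)) \<partial>P) ` {..<M}) + \<beta> * ln (real M) / real n"
proof -
  have continuous: "continuous_on UNIV \<phi>"
    using DERIV_isCont[OF \<phi>_deriv] by (simp add: continuous_at_imp_continuous_on)
  interpret binary_classification Mx P M h \<phi>
    by (rule binary_classification.intro) (fact P sets_P Y h_meas h_range continuous)+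
  have "\<beta> > 0" and "M > 0"
    using \<beta>\<phi>_pos \<beta> M by auto
  have "concave_on {-1..1} (\<lambda>x. exp (- \<phi> x / \<beta>))"
    using \<beta>\<phi>_pos \<beta> \<phi>_deriv \<phi>'_deriv cond by (intro concave_on_exp_neg_div) auto
  define E where "E j = (\<integral>z. \<phi> (- snd z * h j (fst z)) \<partial>P)" for j
  have "Min (E ` {..<M}) \<in> E ` {..<M}"
    using \<open>M > 0\<close> by (intro Min_in) auto
  then obtain j where "j < M" and j_min: "Min (E ` {..<M}) = E j"
    by auto
  have "(\<integral>Z. loss \<phi> M h (Z n) (mirror_avg \<phi> M h \<beta> n Z) \<partial>sample n)
      \<le> (\<integral>Z. (\<Sum>i\<in>{1..n}. loss \<phi> M h (Z i) (mirror_weight \<phi> M h \<beta> Z (i - 1))) \<partial>sample n) / n"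
    using \<phi>_convex n \<open>M > 0\<close> by (rule expected_loss_mirror_avg_le)
  also have "\<dots> \<le> (n * E j + \<beta> * ln M) / n"
    using expected_cumulative_loss_le[OF \<open>concave_on _ _\<close> \<open>\<beta> > 0\<close> \<open>j < M\<close>]
    by (simp add: E_def divide_right_mono)
  also have "\<dots> = E j + \<beta> * ln M / n"
    using n by (simp add: field_simps)
  finally show ?thesis
    unfolding E_def[symmetric] j_min .
qed

end
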